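(* Let $\gamma\in(0,1]$, $\alpha>0$ and $N$ be such that $0<\lambda=1-\gamma/N^\alpha<1$. Then $$-\frac1N\sum_{i=1}^b\big[(J^T(s^* ))^{-1}\big]_{ii}\,\tilde f_i(s^* )\ge\frac{\lambda\gamma}{3N^{1+\alpha}}.$$
   Context: $b\ge1$ is an integer. The mean-field vector field is $f_k(s)=\lambda(s_{k-1}^2-s_k^2)-(s_k-s_{k+1})$, $k=1,\dots,b$, with $s_0=1,s_{b+1}=0$; $s^*$ is its unique equilibrium in $\{s\in\mathbb R^b:1\ge s_1\ge\cdots\ge s_b\ge0\}$. $J(s^* )$ is the $b\times b$ tridiagonal Jacobian of $f$ at $s^*$ with $J_{kk}=-2\lambda s^*_k-1$, $J_{k,k+1}=1$, $J_{k+1,k}=2\lambda s^*_k$ (invertible). $\tilde f_i(s)=\frac12[\lambda(s_{i-1}^2-s_i^2)+(s_i-s_{i+1})]$. In the paper, $[(J^T(s^* ))^{-1}]_{ii}=\nabla^2 g(s)_{ii}$ for the solution $g$ of Stein's equation $\nabla g(s)\cdot J(s^* )(s-s^* )=\|s-s^*\|^2$, and the lemma is stated for $s$ with $\|s-s^*\|^{2r}\le N^{-\epsilon}$; the quantity does not depend on $s$. *)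

theory Defs
  imports Complex_Main "Jordan_Normal_Form.Matrix"
begin

(* States s :: nat => real, with s_1..s_b the coordinates and the boundary
   conventions s_0 = 1, s_(b+1) = 0 (we require s k = 0 for all k > b). *)

definition mf_field :: "real \<Rightarrow> (nat \<Rightarrow> real) \<Rightarrow> nat \<Rightarrow> real" where
  "mf_field lam s k = lam * ((s (k-1))\<^sup>2 - (s k)\<^sup>2) - (s k - s (k+1))"

definition mf_ftilde :: "real \<Rightarrow> (nat \<Rightarrow> real) \<Rightarrow> nat \<Rightarrow> real" where
  "mf_ftilde lam s i = (1/2) * (lam * ((s (i-1))\<^sup>2 - (s i)\<^sup>2) + (s i - s (i+1)))"

definition is_ord_equilibrium :: "real \<Rightarrow> nat \<Rightarrow> (nat \<Rightarrow> real) \<Rightarrow> bool" where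
  "is_ord_equilibrium lam b s \<longleftrightarrow>
     s 0 = 1 \<and> (\<forall>k>b. s k = 0) \<and>
     (\<forall>k. 1 \<le> k \<and> k \<le> b \<longrightarrow> s k \<le> s (k-1) \<and> s (k+1) \<le> s k) \<and>
     (\<forall>k. 1 \<le> k \<and> k \<le> b \<longrightarrow> mf_field lam s k = 0)"

definition sstar :: "real \<Rightarrow> nat \<Rightarrow> nat \<Rightarrow> real" where
  "sstar lam b = (THE s. is_ord_equilibrium lam b s)"

(* Jacobian J at sstar as b x b matrix; matrix index i (0-based) corresponds to k = i+1 *)
definition jac :: "real \<Rightarrow> nat \<Rightarrow> real mat" where
  "jac lam b = mat b b (\<lambda>(i,j).
     if i = j then - 2 * lam * sstar lam b (i+1) - 1
     else if j = i + 1 then 1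
     else if i = j + 1 then 2 * lam * sstar lam b (j+1)
     else 0)"

definition mat_inv :: "nat \<Rightarrow> real mat \<Rightarrow> real mat" where
  "mat_inv n A = (THE M. M \<in> carrier_mat n n \<and> A * M = 1\<^sub>m n \<and> M * A = 1\<^sub>m n)"

end

(*
  At the equilibrium s^* we have f = 0, so f~_i = s^*_i - s^*_{i+1} >= 0 and the sum telescopes once
  the weights are bounded below. J^T acts as z_i |-> (z_{i-1} - z_i) + c_i (z_{i+1} - z_i) with
  c_i = 2 lam s^*_i in [0, 2] and zero boundary values, so it satisfies a discrete minimum principle:
  it is invertible, its inverse is entrywise nonpositive, and reading the equation for the j-th
  column of the inverse at row j gives -[(J^T)^{-1}]_jj >= 1 / (1 + c_j) >= 1/3. Hence the quantity
  is at least s^*_1 / (3N), and s^*_1 = lam (1 - (s^*_b)^2) >= lam (1 - lam) = lam gamma / N^alpha.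
  The equilibrium itself is the orbit of s_k = lam (s_{k-1}^2 - t^2), s_0 = 1, for t = s^*_b; the
  fixed-point equation s_b = t has exactly one admissible root, by the intermediate value theorem
  and strict monotonicity of the orbit in t.
*)
theory Submission
  imports Defs "Jordan_Normal_Form.Determinant"
begin

lemma ord_equilibrium_Suc_le:
  assumes "is_ord_equilibrium lam b s" "k \<le> b"
  shows "s (Suc k) \<le> s k"
proof (cases "k < b")
  case True
  have "\<forall>k. 1 \<le> k \<and> k \<le> b \<longrightarrow> s k \<le> s (k - 1)"
    using assms(1) unfolding is_ord_equilibrium_def by blast
  then show ?thesis using True by (auto dest: spec[of _ "Suc k"])
next
  case False
  then have "k = b" using assms(2) by simp
  then show ?thesis using assms(1) unfolding is_ord_equilibrium_def
    by (cases b) auto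
qed

lemma ord_equilibrium_antimono:
  assumes "is_ord_equilibrium lam b s" "j \<le> k" "k \<le> b + 1"
  shows "s k \<le> s j"
  using assms(2,3)
proof (induction k rule: dec_induct)
  case (step n)
  then show ?case using ord_equilibrium_Suc_le[OF assms(1), of n] by simp
qed simp

lemma ord_equilibrium_bounds:
  assumes "is_ord_equilibrium lam b s" "k \<le> b + 1"
  shows "0 \<le> s k" "s k \<le> 1"
proof -
  have "s (b + 1) = 0" "s 0 = 1" using assms(1) unfolding is_ord_equilibrium_def by auto
  then show "0 \<le> s k" "s k \<le> 1"
    using ord_equilibrium_antimono[OF assms(1)] assms(2) by (metis le0 order.refl)+
qed

lemma ord_equilibrium_step:
  assumes "is_ord_equilibrium lam b s" "1 \<le> k" "k \<le> b"
  shows "s k = lam * ((s (k - 1))\<^sup>2 - (s b)\<^sup>2)"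
proof -
  have field: "mf_field lam s (Suc i) =
      (s (Suc (Suc i)) - s (Suc i)) - lam * ((s (Suc i))\<^sup>2 - (s i)\<^sup>2)" for i
    unfolding mf_field_def by (simp add: algebra_simps)
  have "0 = (\<Sum>i = k - 1..b - 1. mf_field lam s (Suc i))"
    using assms unfolding is_ord_equilibrium_def by (intro sum.neutral[symmetric]) auto
  also have "\<dots> = (s (Suc b) - s k) - lam * ((s b)\<^sup>2 - (s (k - 1))\<^sup>2)"
    using assms(2,3) sum_Suc_diff[of "k - 1" "b - 1" "\<lambda>i. s (Suc i)"]
      sum_Suc_diff[of "k - 1" "b - 1" "\<lambda>i. (s i)\<^sup>2"]
    unfolding field sum_subtractf sum_distrib_left[symmetric] by simp
  finally show ?thesis using assms(1) unfolding is_ord_equilibrium_def by (simp add: algebra_simps)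
qed

text \<open>Summing \<open>f\<^sub>j(s) = 0\<close> over \<open>j = k..b\<close> telescopes to the recursion below with \<open>t = s\<^sub>b\<close>.\<close>

primrec eq_orbit :: "real \<Rightarrow> real \<Rightarrow> nat \<Rightarrow> real" where
  "eq_orbit lam t 0 = 1"
| "eq_orbit lam t (Suc k) = lam * ((eq_orbit lam t k)\<^sup>2 - t\<^sup>2)"

lemma ord_equilibrium_eq_orbit:
  assumes "is_ord_equilibrium lam b s" "k \<le> b"
  shows "s k = eq_orbit lam (s b) k"
  using assms(2)
proof (induction k)
  case 0
  then show ?case using assms(1) unfolding is_ord_equilibrium_def by simp
next
  case (Suc k)
  then show ?case using ord_equilibrium_step[OF assms(1), of "Suc k"] by simp
qed

lemma eq_orbit_Suc_le:
  assumes "0 \<le> lam" "lam \<le> 1" "\<And>j. j \<le> k \<Longrightarrow> 0 \<le> eq_orbit lam t j"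
  shows "eq_orbit lam t (Suc k) \<le> eq_orbit lam t k"
  using assms(3)
proof (induction k)
  case 0
  have "lam * (1 - t\<^sup>2) \<le> lam" using assms(1) by (simp add: mult_left_le)
  then show ?case using assms(2) by simp
next
  case (Suc k)
  then have "eq_orbit lam t (Suc k) \<le> eq_orbit lam t k" "0 \<le> eq_orbit lam t (Suc k)"
    by (simp, metis order.refl)
  then have "(eq_orbit lam t (Suc k))\<^sup>2 \<le> (eq_orbit lam t k)\<^sup>2" by (simp add: power_mono)
  then show ?case using assms(1) by (simp add: mult_left_mono)
qed

lemma eq_orbit_antimono:
  assumes "0 \<le> lam" "lam \<le> 1" "\<And>j. j \<le> k \<Longrightarrow> 0 \<le> eq_orbit lam t j" "i \<le> k"
  shows "eq_orbit lam t k \<le> eq_orbit lam t i"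
  using assms(4,3)
proof (induction k rule: dec_induct)
  case (step n)
  have "eq_orbit lam t (Suc n) \<le> eq_orbit lam t n"
    using eq_orbit_Suc_le[OF assms(1,2)] step.prems by simp
  then show ?case using step.IH step.prems by simp
qed simp

lemma eq_orbit_strict_antimono_param:
  assumes "0 < lam" "0 \<le> t" "t < t'" "\<And>j. j < k \<Longrightarrow> 0 \<le> eq_orbit lam t' j" "1 \<le> k"
  shows "eq_orbit lam t' k < eq_orbit lam t k"
  using assms(5,4)
proof (induction k rule: dec_induct)
  case base
  have "t\<^sup>2 < t'\<^sup>2" using assms(2,3) by (simp add: power_strict_mono)
  then show ?case using assms(1) by simp
next
  case (step n)
  then have "(eq_orbit lam t' n)\<^sup>2 < (eq_orbit lam t n)\<^sup>2"
    by (simp add: power_strict_mono)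
  moreover have "t\<^sup>2 < t'\<^sup>2" using assms(2,3) by (simp add: power_strict_mono)
  ultimately show ?case using assms(1) by simp
qed

lemma ord_equilibrium_unique:
  assumes "0 < lam" "1 \<le> b" "is_ord_equilibrium lam b s" "is_ord_equilibrium lam b s'"
  shows "s = s'"
proof -
  have last_le: "u b \<le> u' b"
    if u: "is_ord_equilibrium lam b u" and u': "is_ord_equilibrium lam b u'" for u u'
  proof (rule ccontr)
    assume "\<not> u b \<le> u' b"
    moreover have "0 \<le> eq_orbit lam (u b) j" if "j < b" for j
      using ord_equilibrium_eq_orbit[OF u, of j] ord_equilibrium_bounds(1)[OF u, of j] that by simp
    ultimately have "eq_orbit lam (u b) b < eq_orbit lam (u' b) b"
      using eq_orbit_strict_antimono_param[OF assms(1) ord_equilibrium_bounds(1)[OF u'], of b "u b" b]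
        assms(2) by simp
    then show False using ord_equilibrium_eq_orbit[OF u, of b] ord_equilibrium_eq_orbit[OF u', of b]
      \<open>\<not> u b \<le> u' b\<close> by simp
  qed
  have "s b = s' b" using last_le[OF assms(3,4)] last_le[OF assms(4,3)] by simp
  show "s = s'"
  proof
    fix k
    show "s k = s' k"
    proof (cases "k \<le> b")
      case True
      then show ?thesis using ord_equilibrium_eq_orbit assms(3,4) \<open>s b = s' b\<close> by metis
    next
      case False
      then show ?thesis using assms(3,4) unfolding is_ord_equilibrium_def by simp
    qed
  qed
qed

text \<open>The running minimum keeps the fixed-point map continuous, and at a root \<open>t\<close> of
  \<open>t = orbit_min lam t b\<close> it forces the whole orbit to stay above \<open>t \<ge> 0\<close>.\<close>

primrec orbit_min :: "real \<Rightarrow> real \<Rightarrow> nat \<Rightarrow> real" where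
  "orbit_min lam t 0 = 1"
| "orbit_min lam t (Suc k) = min (orbit_min lam t k) (eq_orbit lam t (Suc k))"

lemma continuous_on_orbit_min: "continuous_on S (\<lambda>t. orbit_min lam t k)"
proof -
  have "continuous_on S (\<lambda>t. eq_orbit lam t k)" for k
    by (induction k) (auto intro!: continuous_intros)
  then show ?thesis by (induction k) (auto intro!: continuous_intros)
qed

lemma orbit_min_le: "j \<le> k \<Longrightarrow> orbit_min lam t k \<le> eq_orbit lam t j"
  by (induction k) (auto simp: le_Suc_eq min.coboundedI1)

lemma orbit_min_attained: "\<exists>j\<le>k. orbit_min lam t k = eq_orbit lam t j"
proof (induction k)
  case (Suc k)
  then show ?case by (auto simp: min_def intro: le_SucI)
qed simp

lemma eq_orbit_fixed_point_exists:
  assumes "0 \<le> lam" "lam \<le> 1" "1 \<le> b"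
  obtains t where "\<And>k. k \<le> b \<Longrightarrow> 0 \<le> eq_orbit lam t k" "eq_orbit lam t b = t"
proof -
  let ?g = "\<lambda>t. t - orbit_min lam t b"
  have "0 \<le> eq_orbit lam 0 k" for k
    using assms(1) by (cases k) simp_all
  then have "?g 0 \<le> 0" using orbit_min_attained[of b lam 0] by fastforce
  moreover have "0 \<le> ?g 1" using orbit_min_le[of 1 b lam 1] assms(3) by simp
  moreover have "continuous_on {0..1} ?g" by (intro continuous_intros continuous_on_orbit_min)
  ultimately obtain t where t: "0 \<le> t" "t \<le> 1" "orbit_min lam t b = t"
    using IVT'[of ?g 0 0 1] by auto
  have ge_t: "t \<le> eq_orbit lam t k" if "k \<le> b" for k
    using orbit_min_le[OF that] t(3) by metis
  then have nonneg: "0 \<le> eq_orbit lam t k" if "k \<le> b" for k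
    using t(1) that by force
  obtain j where "j \<le> b" "eq_orbit lam t j = t" using orbit_min_attained[of b lam t] t(3) by metis
  then have "eq_orbit lam t b \<le> t" using eq_orbit_antimono[OF assms(1,2) nonneg] by metis
  then have "eq_orbit lam t b = t" using ge_t[of b] by simp
  with that nonneg show ?thesis by blast
qed

lemma eq_orbit_fixed_point_ord_equilibrium:
  assumes "0 \<le> lam" "lam \<le> 1" "\<And>k. k \<le> b \<Longrightarrow> 0 \<le> eq_orbit lam t k"
    and "eq_orbit lam t b = t"
  shows "is_ord_equilibrium lam b (\<lambda>k. if k \<le> b then eq_orbit lam t k else 0)"
proof -
  define s where "s = (\<lambda>k. if k \<le> b then eq_orbit lam t k else 0)"
  have Suc_le: "s (Suc k) \<le> s k" if "k \<le> b" for k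
    using eq_orbit_Suc_le[OF assms(1,2)] assms(3) assms(3)[of b] assms(4) that
    by (auto simp: s_def le_Suc_eq)
  \<comment> \<open>at k = b both sides vanish, since the orbit returns to t\<close>
  have rec: "s (Suc k) = lam * ((s k)\<^sup>2 - t\<^sup>2)" if "k \<le> b" for k
    using that assms(4) by (cases "k = b") (auto simp: s_def)
  have "is_ord_equilibrium lam b s"
    unfolding is_ord_equilibrium_def
  proof (intro conjI allI impI)
    fix k assume k: "1 \<le> k \<and> k \<le> b"
    then obtain m where m: "k = Suc m" "m < b" by (cases k) auto
    show "s k \<le> s (k - 1)" "s (k + 1) \<le> s k"
      using Suc_le[of m] Suc_le[of "Suc m"] m by simp_all
    show "mf_field lam s k = 0"
      unfolding mf_field_def m(1) using rec[of m] rec[of "Suc m"] m(2)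
      by (simp add: algebra_simps)
  qed (simp_all add: s_def)
  then show ?thesis unfolding s_def .
qed

lemma sstar_ord_equilibrium:
  assumes "0 < lam" "lam \<le> 1" "1 \<le> b"
  shows "is_ord_equilibrium lam b (sstar lam b)"
proof -
  obtain t where "\<And>k. k \<le> b \<Longrightarrow> 0 \<le> eq_orbit lam t k" "eq_orbit lam t b = t"
    using eq_orbit_fixed_point_exists assms by (metis less_imp_le)
  then have "\<exists>s. is_ord_equilibrium lam b s"
    using eq_orbit_fixed_point_ord_equilibrium assms by (metis less_imp_le)
  then show ?thesis
    unfolding sstar_def using ord_equilibrium_unique[OF assms(1,3)] by (metis theI)
qed

lemma mat_inv_inverse:
  fixes A :: "real mat"
  assumes A: "A \<in> carrier_mat n n" and det: "det A \<noteq> 0"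
  shows "mat_inv n A \<in> carrier_mat n n" "A * mat_inv n A = 1\<^sub>m n" "mat_inv n A * A = 1\<^sub>m n"
proof -
  obtain M where M: "M \<in> carrier_mat n n" "M * A = 1\<^sub>m n" "A * M = 1\<^sub>m n"
    using det_non_zero_imp_unit[OF A det] unfolding Units_def ring_mat_def by auto
  have "mat_inv n A = M"
    unfolding mat_inv_def
  proof (rule the_equality)
    show "M \<in> carrier_mat n n \<and> A * M = 1\<^sub>m n \<and> M * A = 1\<^sub>m n" using M by simp
  next
    fix M' assume M': "M' \<in> carrier_mat n n \<and> A * M' = 1\<^sub>m n \<and> M' * A = 1\<^sub>m n"
    then have M'c: "M' \<in> carrier_mat n n" and M'A: "M' * A = 1\<^sub>m n" by auto
    have "M' = M' * (A * M)" using M(3) M'c by simp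
    also have "\<dots> = (M' * A) * M" using M'c A M(1) by (simp add: assoc_mult_mat)
    finally show "M' = M" using M'A M(1) by simp
  qed
  then show "mat_inv n A \<in> carrier_mat n n" "A * mat_inv n A = 1\<^sub>m n" "mat_inv n A * A = 1\<^sub>m n"
    using M by simp_all
qed

text \<open>The generator of a birth-death chain on \<open>{0..<b}\<close> killed at both ends, with
  up-rates \<open>c i\<close>; it is \<open>J\<^sup>T\<close> in 0-based indices.\<close>

definition tridiag_op :: "nat \<Rightarrow> (nat \<Rightarrow> real) \<Rightarrow> (nat \<Rightarrow> real) \<Rightarrow> nat \<Rightarrow> real" where
  "tridiag_op b c z i =
     (if 0 < i then z (i - 1) else 0) - z i + c i * ((if i + 1 < b then z (i + 1) else 0) - z i)"

definition tridiag_mat :: "nat \<Rightarrow> (nat \<Rightarrow> real) \<Rightarrow> real mat" where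
  "tridiag_mat b c = mat b b (\<lambda>(i, j).
     if j = i then - 1 - c i else if j + 1 = i then 1 else if j = i + 1 then c i else 0)"

lemma dim_tridiag_mat [simp]: "dim_row (tridiag_mat b c) = b" "dim_col (tridiag_mat b c) = b"
  unfolding tridiag_mat_def by simp_all

lemma tridiag_mat_carrier: "tridiag_mat b c \<in> carrier_mat b b"
  by (simp add: carrier_matI)

lemma tridiag_mat_row_scalar_prod:
  assumes "dim_vec v = b" "i < b"
  shows "row (tridiag_mat b c) i \<bullet> v = tridiag_op b c (\<lambda>k. v $ k) i"
proof -
  have "row (tridiag_mat b c) i \<bullet> v =
      (\<Sum>j<b. (if j = i then (- 1 - c i) * v $ j else 0) + (if j = i - 1 \<and> 0 < i then v $ j else 0)
        + (if j = i + 1 then c i * v $ j else 0))"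
    using assms by (auto simp: tridiag_mat_def scalar_prod_def atLeast0LessThan intro!: sum.cong)
  also have "\<dots> = tridiag_op b c (\<lambda>k. v $ k) i"
    using assms(2) by (simp add: sum.distrib sum.delta tridiag_op_def algebra_simps)
  finally show ?thesis .
qed

lemma tridiag_op_cong:
  "i < b \<Longrightarrow> (\<And>k. k < b \<Longrightarrow> z k = z' k) \<Longrightarrow> tridiag_op b c z i = tridiag_op b c z' i"
  unfolding tridiag_op_def by simp

lemma tridiag_op_uminus: "tridiag_op b c (\<lambda>k. - z k) i = - tridiag_op b c z i"
  unfolding tridiag_op_def by (simp add: algebra_simps)

lemma transpose_jac_tridiag:
  "transpose_mat (jac lam b) = tridiag_mat b (\<lambda>i. 2 * lam * sstar lam b (i + 1))"
  by (rule eq_matI) (auto simp: jac_def tridiag_mat_def)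

lemma tridiag_op_min_principle:
  assumes c: "\<And>i. i < b \<Longrightarrow> 0 \<le> c i" and L: "\<And>i. i < b \<Longrightarrow> tridiag_op b c z i \<le> 0"
  shows "i < b \<Longrightarrow> 0 \<le> z i"
proof (rule ccontr)
  assume "i < b" "\<not> 0 \<le> z i"
  define m where "m = Min (z ` {..<b})"
  have m_le: "m \<le> z q" if "q < b" for q
    unfolding m_def using that by simp
  have "m \<in> z ` {..<b}" unfolding m_def using \<open>i < b\<close> by (intro Min_in) auto
  then have ex: "\<exists>p. p < b \<and> z p = m" by auto
  \<comment> \<open>at the first index where the negative minimum is attained, both differences push the operator up\<close>
  define p where "p = (LEAST p. p < b \<and> z p = m)"
  have p: "p < b" "z p = m" using LeastI_ex[OF ex] unfolding p_def by auto
  have m_neg: "m < 0" using m_le[OF \<open>i < b\<close>] \<open>\<not> 0 \<le> z i\<close> by simp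
  have "0 < (if 0 < p then z (p - 1) else 0) - z p"
  proof (cases "0 < p")
    case True
    then have "z (p - 1) \<noteq> m"
      using not_less_Least[of "p - 1" "\<lambda>p. p < b \<and> z p = m"] p(1) unfolding p_def[symmetric] by simp
    moreover have "m \<le> z (p - 1)" using m_le less_imp_diff_less[OF p(1)] by blast
    ultimately show ?thesis using True p by (simp add: order_le_neq_trans)
  qed (use p m_neg in simp)
  moreover have "0 \<le> c p * ((if p + 1 < b then z (p + 1) else 0) - z p)"
    using c[OF p(1)] m_le[of "p + 1"] p m_neg by simp
  ultimately have "0 < tridiag_op b c z p" unfolding tridiag_op_def by linarith
  then show False using L[OF p(1)] by simp
qed

lemma tridiag_mat_det_nonzero:
  assumes "\<And>i. i < b \<Longrightarrow> 0 \<le> c i"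
  shows "det (tridiag_mat b c) \<noteq> 0"
proof
  assume "det (tridiag_mat b c) = 0"
  then obtain v where v: "v \<in> carrier_vec b" "v \<noteq> 0\<^sub>v b" "tridiag_mat b c *\<^sub>v v = 0\<^sub>v b"
    using det_0_iff_vec_prod_zero_field[OF tridiag_mat_carrier] by blast
  have op_zero: "tridiag_op b c (\<lambda>k. v $ k) i = 0" if "i < b" for i
  proof -
    have "(tridiag_mat b c *\<^sub>v v) $ i = 0" using v(3) that by simp
    then show ?thesis using tridiag_mat_row_scalar_prod[of v b i c] v(1) that by simp
  qed
  have "0 \<le> v $ i" "0 \<le> - v $ i" if "i < b" for i
    using tridiag_op_min_principle[of b c "\<lambda>k. v $ k"]
      tridiag_op_min_principle[of b c "\<lambda>k. - v $ k"] assms op_zero tridiag_op_uminus that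
    by simp_all
  then have "v = 0\<^sub>v b" using v(1) by (intro eq_vecI) (auto intro: order.antisym)
  then show False using v(2) by simp
qed

lemma tridiag_mat_inv_diag:
  assumes c: "\<And>i. i < b \<Longrightarrow> 0 \<le> c i" and j: "j < b"
  shows "1 / (1 + c j) \<le> - mat_inv b (tridiag_mat b c) $$ (j, j)"
proof -
  let ?M = "mat_inv b (tridiag_mat b c)"
  have M: "?M \<in> carrier_mat b b" "tridiag_mat b c * ?M = 1\<^sub>m b"
    using mat_inv_inverse[OF tridiag_mat_carrier tridiag_mat_det_nonzero[OF c]] by simp_all
  define z where "z k = - ?M $$ (k, j)" for k
  have col_op: "tridiag_op b c (\<lambda>k. ?M $$ (k, j)) i = (if i = j then 1 else 0)" if "i < b" for i
  proof -
    have "(tridiag_mat b c * ?M) $$ (i, j) = tridiag_op b c (\<lambda>k. ?M $$ (k, j)) i"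
      using tridiag_mat_row_scalar_prod[of "col ?M j" b i c] M(1) j that
      by (auto simp: carrier_matD intro: tridiag_op_cong)
    then show ?thesis using M(2) j that by simp
  qed
  have Lz: "tridiag_op b c z i = (if i = j then - 1 else 0)" if "i < b" for i
    using col_op[OF that] tridiag_op_uminus[of b c "\<lambda>k. ?M $$ (k, j)"] unfolding z_def by simp
  have z_nonneg: "0 \<le> z i" if "i < b" for i
    using tridiag_op_min_principle[of b c z] c Lz that by simp
  define l where "l = (if 0 < j then z (j - 1) else 0)"
  define r where "r = (if j + 1 < b then z (j + 1) else 0)"
  have "l - z j + c j * (r - z j) = - 1"
    using Lz[OF j] unfolding tridiag_op_def l_def r_def by simp
  then have "z j * (1 + c j) = 1 + l + c j * r" by (simp add: algebra_simps)
  moreover have "0 \<le> l" "0 \<le> c j * r"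
    using z_nonneg[of "j - 1"] z_nonneg[of "j + 1"] c[OF j] j unfolding l_def r_def by simp_all
  ultimately have "1 \<le> z j * (1 + c j)" by linarith
  then show ?thesis using c[OF j] by (simp add: z_def field_simps)
qed

lemma mf_ftilde_eq: "mf_ftilde lam s k = s k - s (k + 1) + mf_field lam s k / 2"
  unfolding mf_ftilde_def mf_field_def by (simp add: field_simps)

lemma ord_equilibrium_weighted_ftilde_ge:
  assumes "is_ord_equilibrium lam b s" "\<And>i. i < b \<Longrightarrow> a \<le> w i"
  shows "a * s 1 \<le> (\<Sum>i<b. w i * mf_ftilde lam s (i + 1))"
proof -
  have ftilde: "mf_ftilde lam s (i + 1) = s (i + 1) - s (i + 2)" if "i < b" for i
    using assms(1) that unfolding mf_ftilde_eq is_ord_equilibrium_def by simp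
  have "a * s 1 = (\<Sum>i<b. a * (s (i + 1) - s (i + 2)))"
    using sum_lessThan_telescope'[of "\<lambda>i. s (i + 1)" b] assms(1)
    unfolding sum_distrib_left[symmetric] is_ord_equilibrium_def by simp
  also have "\<dots> \<le> (\<Sum>i<b. w i * mf_ftilde lam s (i + 1))"
  proof (rule sum_mono)
    fix i assume "i \<in> {..<b}"
    then have "i < b" by simp
    then show "a * (s (i + 1) - s (i + 2)) \<le> w i * mf_ftilde lam s (i + 1)"
      unfolding ftilde[OF \<open>i < b\<close>] using assms(2) ord_equilibrium_Suc_le[OF assms(1), of "i + 1"]
      by (intro mult_right_mono) simp_all
  qed
  finally show ?thesis .
qed

lemma ord_equilibrium_first_ge:
  assumes "0 \<le> lam" "1 \<le> b" "is_ord_equilibrium lam b s"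
  shows "lam * (1 - lam) \<le> s 1"
proof -
  have s1: "s 1 = lam * (1 - (s b)\<^sup>2)"
    using ord_equilibrium_step[OF assms(3) order.refl assms(2)] assms(3)
    unfolding is_ord_equilibrium_def by simp
  then have "s 1 \<le> lam" using assms(1) by (simp add: mult_left_le)
  moreover have "(s b)\<^sup>2 \<le> s b"
    using ord_equilibrium_bounds[OF assms(3), of b] by (simp add: power2_eq_square mult_left_le)
  moreover have "s b \<le> s 1" using ord_equilibrium_antimono[OF assms(3)] assms(2) by simp
  ultimately have "lam * (1 - lam) \<le> lam * (1 - (s b)\<^sup>2)"
    using assms(1) by (intro mult_left_mono) auto
  then show ?thesis using s1 by simp
qed

lemma transpose_jac_inv_diag:
  assumes "0 < lam" "lam \<le> 1" "1 \<le> b" "i < b"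
  shows "1 / 3 \<le> - mat_inv b (transpose_mat (jac lam b)) $$ (i, i)"
proof -
  let ?c = "\<lambda>i. 2 * lam * sstar lam b (i + 1)"
  have E: "is_ord_equilibrium lam b (sstar lam b)" using sstar_ord_equilibrium assms(1-3) .
  have c_bounds: "0 \<le> ?c k" "?c k \<le> 2" if "k < b" for k
    using ord_equilibrium_bounds[OF E, of "k + 1"] assms(1,2) that by (simp_all add: mult_le_one)
  have "1 / 3 \<le> 1 / (1 + ?c i)" using c_bounds[OF assms(4)] by (intro divide_left_mono) auto
  also have "\<dots> \<le> - mat_inv b (transpose_mat (jac lam b)) $$ (i, i)"
    unfolding transpose_jac_tridiag by (rule tridiag_mat_inv_diag) (use c_bounds(1) assms(4) in auto)
  finally show ?thesis .
qed

theorem lemma10: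
  fixes b N :: nat and \<gamma> \<alpha> lam :: real
  assumes "b \<ge> 1"
    and "0 < \<gamma>" and "\<gamma> \<le> 1" and "\<alpha> > 0"
    and "lam = 1 - \<gamma> / (real N powr \<alpha>)"
    and "0 < lam" and "lam < 1"
  shows "- (1 / real N) * (\<Sum>i<b. (mat_inv b (transpose_mat (jac lam b))) $$ (i, i)
              * mf_ftilde lam (sstar lam b) (i+1))
         \<ge> lam * \<gamma> / (3 * real N powr (1 + \<alpha>))"
proof -
  let ?M = "mat_inv b (transpose_mat (jac lam b))"
  have E: "is_ord_equilibrium lam b (sstar lam b)"
    using sstar_ord_equilibrium assms(1,6,7) by simp
  have "1 / 3 * sstar lam b 1 \<le> (\<Sum>i<b. - ?M $$ (i, i) * mf_ftilde lam (sstar lam b) (i + 1))"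
    using transpose_jac_inv_diag assms(1,6,7) by (intro ord_equilibrium_weighted_ftilde_ge[OF E]) simp
  moreover have "lam * (1 - lam) \<le> sstar lam b 1"
    using ord_equilibrium_first_ge[OF _ assms(1) E] assms(6) by simp
  ultimately have sum_ge: "lam * (1 - lam) / 3 \<le> (\<Sum>i<b. - ?M $$ (i, i) * mf_ftilde lam (sstar lam b) (i + 1))"
    by linarith
  have "0 < real N" using assms(5,7) by (cases "N = 0") auto
  then have "lam * \<gamma> / (3 * real N powr (1 + \<alpha>)) = 1 / real N * (lam * (1 - lam) / 3)"
    using assms(5) by (simp add: powr_add)
  also have "\<dots> \<le> 1 / real N * (\<Sum>i<b. - ?M $$ (i, i) * mf_ftilde lam (sstar lam b) (i + 1))"
    using sum_ge by (intro mult_left_mono) auto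
  finally show ?thesis by (simp add: sum_negf)
qed

end
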